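(* The structure $\mathbb{C}_2=(\{0,1\};\neq,\{0\},\{1\})$ pp-constructs the structure $\mathbb{H}=(\{0,1,2\};\mu_2,\tau_0,\tau_1,\psi_2',\rho_2,\{0,2\},\{1,2\},\{0\},\{1\},\{2\})$.
   Context: Relations on $\{0,1,2\}$: $\mu_2$ is the equivalence relation with classes $\{0,1\},\{2\}$; $\rho_2=\{0,1,2\}^2\setminus\mu_2$; $\psi_2'=\{(0,1),(1,0)\}$; $\tau_0=\{(0,0),(1,0),(2,1)\}$; $\tau_1=\{(0,1),(1,1),(2,0)\}$. A relation is pp-definable in $\mathbb{A}$ if definable by a formula using the relations of $\mathbb{A}$, equality, conjunction and existential quantification. A pp-power of $\mathbb{A}$ is a structure isomorphic to one with domain $A^n$ whose $k$-ary relations, viewed as $kn$-ary relations on $A$, are pp-definable in $\mathbb{A}$. $\mathbb{A}$ pp-constructs $\mathbb{B}$ if $\mathbb{B}$ is homomorphically equivalent (homomorphisms in both directions) to a pp-power of $\mathbb{A}$. *)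

theory Defs
  imports Main
begin

text \<open>A relational structure: a domain together with a list of relations,
  each given with its arity; a k-ary relation is a set of lists of length k.\<close>
type_synonym 'a struct = "'a set \<times> (nat \<times> 'a list set) list"

definition dom_of :: "'a struct \<Rightarrow> 'a set" where
  "dom_of S = fst S"

definition rels_of :: "'a struct \<Rightarrow> (nat \<times> 'a list set) list" where
  "rels_of S = snd S"

definition wf_struct :: "'a struct \<Rightarrow> bool" where
  "wf_struct S \<longleftrightarrow> dom_of S \<noteq> {} \<and>
     (\<forall>(k, R) \<in> set (rels_of S). R \<subseteq> {xs. length xs = k \<and> set xs \<subseteq> dom_of S})"

definition signature :: "'a struct \<Rightarrow> nat list" where
  "signature S = map fst (rels_of S)"

definition is_hom :: "('a \<Rightarrow> 'b) \<Rightarrow> 'a struct \<Rightarrow> 'b struct \<Rightarrow> bool" where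
  "is_hom h A B \<longleftrightarrow> signature A = signature B \<and> h ` dom_of A \<subseteq> dom_of B \<and>
     (\<forall>j < length (rels_of A). \<forall>xs \<in> snd (rels_of A ! j). map h xs \<in> snd (rels_of B ! j))"

definition hom_equiv :: "'a struct \<Rightarrow> 'b struct \<Rightarrow> bool" where
  "hom_equiv A B \<longleftrightarrow> (\<exists>h. is_hom h A B) \<and> (\<exists>g. is_hom g B A)"

text \<open>Primitive positive formulas over a relational signature; variables are naturals,
  relation symbols are indices into the relation list.\<close>
datatype ppf = PTrue | PRel nat "nat list" | PEq nat nat | PConj ppf ppf | PEx nat ppf

fun pp_sat :: "'a struct \<Rightarrow> ppf \<Rightarrow> (nat \<Rightarrow> 'a) \<Rightarrow> bool" where
  "pp_sat A PTrue s = True"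
| "pp_sat A (PRel j vs) s = (j < length (rels_of A) \<and> length vs = fst (rels_of A ! j) \<and>
      map s vs \<in> snd (rels_of A ! j))"
| "pp_sat A (PEq u v) s = (s u = s v)"
| "pp_sat A (PConj p q) s = (pp_sat A p s \<and> pp_sat A q s)"
| "pp_sat A (PEx v p) s = (\<exists>a \<in> dom_of A. pp_sat A p (s(v := a)))"

text \<open>A m-ary relation R is pp-definable in A if it is the set of tuples (values of the
  variables 0..m-1) satisfying some pp-formula (further free variables are
  implicitly existentially quantified over the domain).\<close>
definition pp_definable :: "'a struct \<Rightarrow> nat \<Rightarrow> 'a list set \<Rightarrow> bool" where
  "pp_definable A m R \<longleftrightarrow> (\<exists>\<phi>. R = {map s [0..<m] | s. (\<forall>i. s i \<in> dom_of A) \<and> pp_sat A \<phi> s})"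

definition is_pp_power :: "'a struct \<Rightarrow> nat \<Rightarrow> 'a list struct \<Rightarrow> bool" where
  "is_pp_power A n P \<longleftrightarrow> n \<ge> 1 \<and> wf_struct P \<and>
     dom_of P = {xs. length xs = n \<and> set xs \<subseteq> dom_of A} \<and>
     (\<forall>(k, R) \<in> set (rels_of P). pp_definable A (k * n) (concat ` R))"

definition pp_constructs :: "'a struct \<Rightarrow> 'b struct \<Rightarrow> bool" where
  "pp_constructs A B \<longleftrightarrow> (\<exists>n P. is_pp_power A n P \<and> hom_equiv B P)"

definition C2 :: "nat struct" where
  "C2 = ({0, 1}, [(2, {[x, y] | x y. x \<in> {0, 1} \<and> y \<in> {0, 1} \<and> x \<noteq> y}),
                  (1, {[0]}), (1, {[1]})])"

definition D3 :: "nat set" where "D3 = {0, 1, 2}"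

definition mu2 :: "nat list set" where
  "mu2 = {[x, y] | x y. (x \<in> {0, 1} \<and> y \<in> {0, 1}) \<or> (x = 2 \<and> y = 2)}"

definition rho2 :: "nat list set" where
  "rho2 = {[x, y] | x y. x \<in> D3 \<and> y \<in> D3} - mu2"

definition psi2' :: "nat list set" where
  "psi2' = {[0, 1], [1, 0]}"

definition tau0 :: "nat list set" where
  "tau0 = {[0, 0], [1, 0], [2, 1]}"

definition tau1 :: "nat list set" where
  "tau1 = {[0, 1], [1, 1], [2, 0]}"

definition H :: "nat struct" where
  "H = (D3, [(2, mu2), (2, tau0), (2, tau1), (2, psi2'), (2, rho2),
             (1, {[0], [2]}), (1, {[1], [2]}), (1, {[0]}), (1, {[1]}), (1, {[2]})])"

end

theory Submission
  imports Defs
begin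

(* Code the elements 0, 1, 2 of H by the pairs 00, 01, 10 over {0, 1}. Each relation of H,
   transported along this coding, lies in a relation on pairs that is pp-definable from the
   disequality and the constants: equal first bits for mu2, different first bits for rho2,
   "the second pair is (0, first bit of the first)" for tau0, and so on. Decoding, which also
   sends the unused pair 11 to 2, maps each of these relations back into the corresponding
   relation of H, so H is homomorphically equivalent to this pp-power of C2. *)

definition blocks :: "nat \<Rightarrow> nat \<Rightarrow> (nat \<Rightarrow> 'a) \<Rightarrow> 'a list list" where
  "blocks n k s = map (\<lambda>i. map s [i * n..<i * n + n]) [0..<k]"

lemma concat_blocks: "concat (blocks n k s) = map s [0..<k * n]"
proof (induction k)
  case (Suc k)
  have "[0..<Suc k * n] = [0..<k * n] @ [k * n..<k * n + n]"
    by (metis add.commute mult_Suc upt_add_eq_append zero_le)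
  with Suc show ?case
    by (simp add: blocks_def)
qed (simp add: blocks_def)

definition pp_rel :: "'a struct \<Rightarrow> nat \<Rightarrow> nat \<Rightarrow> ppf \<Rightarrow> 'a list list set" where
  "pp_rel A n k \<phi> = {blocks n k s | s. (\<forall>i. s i \<in> dom_of A) \<and> pp_sat A \<phi> s}"

definition pp_power :: "'a struct \<Rightarrow> nat \<Rightarrow> (nat \<times> ppf) list \<Rightarrow> 'a list struct" where
  "pp_power A n \<phi>s =
     ({xs. length xs = n \<and> set xs \<subseteq> dom_of A}, map (\<lambda>(k, \<phi>). (k, pp_rel A n k \<phi>)) \<phi>s)"

lemma dom_of_pp_power [simp]:
  "dom_of (pp_power A n \<phi>s) = {xs. length xs = n \<and> set xs \<subseteq> dom_of A}"
  by (simp add: pp_power_def dom_of_def)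

lemma rels_of_pp_power [simp]:
  "rels_of (pp_power A n \<phi>s) = map (\<lambda>(k, \<phi>). (k, pp_rel A n k \<phi>)) \<phi>s"
  by (simp add: pp_power_def rels_of_def)

lemma pp_definable_concat_pp_rel: "pp_definable A (k * n) (concat ` pp_rel A n k \<phi>)"
proof -
  have "concat ` pp_rel A n k \<phi> =
      {map s [0..<k * n] | s. (\<forall>i. s i \<in> dom_of A) \<and> pp_sat A \<phi> s}"
    unfolding pp_rel_def by (auto simp flip: concat_blocks)
  then show ?thesis
    unfolding pp_definable_def by blast
qed

lemma pp_rel_subset:
  "pp_rel A n k \<phi> \<subseteq> {xss. length xss = k \<and> set xss \<subseteq> {xs. length xs = n \<and> set xs \<subseteq> dom_of A}}"
  by (auto simp: pp_rel_def blocks_def)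

lemma is_pp_power_pp_power:
  assumes "n \<ge> 1" and "dom_of A \<noteq> {}"
  shows "is_pp_power A n (pp_power A n \<phi>s)"
proof -
  from assms(2) obtain a where "a \<in> dom_of A" by blast
  then have "replicate n a \<in> dom_of (pp_power A n \<phi>s)"
    by (auto simp: subset_iff)
  then have "wf_struct (pp_power A n \<phi>s)"
    using pp_rel_subset unfolding wf_struct_def by fastforce
  with assms(1) show ?thesis
    unfolding is_pp_power_def by (auto simp: pp_definable_concat_pp_rel)
qed

lemma pp_relI:
  assumes "length xss = k" and "\<forall>xs \<in> set xss. length xs = n \<and> set xs \<subseteq> dom_of A"
    and "a \<in> dom_of A"
    and "pp_sat A \<phi> (\<lambda>i. if i < k * n then concat xss ! i else a)"
  shows "xss \<in> pp_rel A n k \<phi>"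
proof -
  define s where "s = (\<lambda>i. if i < k * n then concat xss ! i else a)"
  have len: "length (concat xss) = k * n"
    using assms(1,2) by (simp add: length_concat sum_list_triv cong: map_cong)
  have "\<forall>i. s i \<in> dom_of A"
  proof
    fix i
    show "s i \<in> dom_of A"
    proof (cases "i < k * n")
      case True
      then have "concat xss ! i \<in> set (concat xss)"
        using len by (intro nth_mem) simp
      moreover have "set (concat xss) \<subseteq> dom_of A"
        using assms(2) by auto
      ultimately show ?thesis
        using True by (auto simp: s_def)
    qed (simp add: s_def assms(3))
  qed
  moreover have "concat (blocks n k s) = concat xss"
    by (rule nth_equalityI) (simp_all add: concat_blocks len s_def)
  then have "blocks n k s = xss"
    using assms(1,2) by (intro concat_injective) (auto simp: blocks_def set_zip)
  ultimately show ?thesis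
    using assms(4)[folded s_def] unfolding pp_rel_def by blast
qed

lemma is_hom_iff_list_all2:
  "is_hom h A B \<longleftrightarrow> h ` dom_of A \<subseteq> dom_of B \<and>
     list_all2 (\<lambda>(k, R) (k', R'). k = k' \<and> map h ` R \<subseteq> R') (rels_of A) (rels_of B)"
  unfolding is_hom_def signature_def list_all2_conv_all_nth
  by (auto simp: list_eq_iff_nth_eq case_prod_beta image_subset_iff)

definition C2_neq :: "nat \<Rightarrow> nat \<Rightarrow> ppf" where
  "C2_neq u v = PRel 0 [u, v]"

definition C2_is0 :: "nat \<Rightarrow> ppf" where
  "C2_is0 u = PRel 1 [u]"

definition C2_is1 :: "nat \<Rightarrow> ppf" where
  "C2_is1 u = PRel 2 [u]"

lemma dom_of_C2 [simp]: "dom_of C2 = {0, 1}"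
  by (simp add: C2_def dom_of_def)

lemma pp_sat_C2_neq [simp]:
  "pp_sat C2 (C2_neq u v) s \<longleftrightarrow> s u \<in> {0, 1} \<and> s v \<in> {0, 1} \<and> s u \<noteq> s v"
  by (auto simp: C2_neq_def C2_def rels_of_def)

lemma pp_sat_C2_is0 [simp]: "pp_sat C2 (C2_is0 u) s \<longleftrightarrow> s u = 0"
  by (simp add: C2_is0_def C2_def rels_of_def)

lemma pp_sat_C2_is1 [simp]: "pp_sat C2 (C2_is1 u) s \<longleftrightarrow> s u = 1"
  by (simp add: C2_is1_def C2_def rels_of_def)

lemma dom_of_H [simp]: "dom_of H = {0, 1, 2}"
  by (simp add: H_def D3_def dom_of_def)

lemma mu2_eq: "mu2 = {[0, 0], [0, 1], [1, 0], [1, 1], [2, 2]}"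
  by (auto simp: mu2_def)

lemma rho2_eq: "rho2 = {[0, 2], [1, 2], [2, 0], [2, 1]}"
  by (auto simp: rho2_def mu2_def D3_def)

lemma rels_of_H [simp]:
  "rels_of H = [(2, mu2), (2, tau0), (2, tau1), (2, psi2'), (2, rho2),
                (1, {[0], [2]}), (1, {[1], [2]}), (1, {[0]}), (1, {[1]}), (1, {[2]})]"
  by (simp add: H_def rels_of_def)

definition H_code :: "nat \<Rightarrow> nat list" where
  "H_code x = (if x = 2 then [1, 0] else [0, x])"

definition H_decode :: "nat list \<Rightarrow> nat" where
  "H_decode xs = (if xs ! 0 = 0 then xs ! 1 else 2)"

definition H_pp_power :: "nat list struct" where
  "H_pp_power = pp_power C2 2
     [(2, PEq 0 2), (2, PConj (C2_is0 2) (PEq 0 3)), (2, PConj (C2_is0 2) (C2_neq 0 3)),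
      (2, PConj (C2_is0 0) (PConj (C2_is0 2) (C2_neq 1 3))), (2, C2_neq 0 2),
      (1, C2_is0 1), (1, C2_neq 0 1), (1, PConj (C2_is0 0) (C2_is0 1)),
      (1, PConj (C2_is0 0) (C2_is1 1)), (1, PConj (C2_is1 0) (C2_is0 1))]"

lemma is_hom_H_code: "is_hom H_code H H_pp_power"
  unfolding is_hom_iff_list_all2 H_pp_power_def
  by (simp add: H_code_def mu2_eq rho2_eq tau0_def tau1_def psi2'_def pp_relI[where a = 0])

(* Stated with Suc 0 because the simplifier normalises the arity 1 in H_pp_power to it. *)
lemma blocks_pairs:
  "blocks 2 (Suc 0) s = [[s 0, s 1]]" "blocks 2 2 s = [[s 0, s 1], [s 2, s 3]]"
  by (simp_all add: blocks_def eval_nat_numeral upt_rec)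

lemma is_hom_H_decode: "is_hom H_decode H_pp_power H"
  unfolding is_hom_iff_list_all2
proof
  show "H_decode ` dom_of H_pp_power \<subseteq> dom_of H"
  proof (rule image_subsetI)
    fix xs
    assume "xs \<in> dom_of H_pp_power"
    then have "length xs = 2" and bits: "set xs \<subseteq> {0, 1}"
      by (simp_all add: H_pp_power_def)
    then have "xs ! 1 \<in> set xs"
      by (intro nth_mem) simp
    with bits show "H_decode xs \<in> dom_of H"
      by (auto simp: H_decode_def)
  qed
  (* Only the variables 0..3 occur in the formulas of H_pp_power. *)
  have pairs: "\<exists>s. s 0 \<in> {0, 1} \<and> s 1 \<in> {0, 1} \<and> s 2 \<in> {0, 1} \<and> s 3 \<in> {0, 1} \<and>
      pp_sat C2 \<phi> s \<and> xss = blocks 2 k s"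
    if "xss \<in> pp_rel C2 2 k \<phi>" for xss k \<phi>
    using that unfolding pp_rel_def dom_of_C2 by blast
  show "list_all2 (\<lambda>(k, R) (k', R'). k = k' \<and> map H_decode ` R \<subseteq> R')
      (rels_of H_pp_power) (rels_of H)"
    unfolding H_pp_power_def
    by (auto simp: H_decode_def mu2_eq rho2_eq tau0_def tau1_def psi2'_def
        blocks_pairs dest!: pairs)
qed

theorem lemma6p3:
  shows "pp_constructs C2 H"
proof -
  have "is_pp_power C2 2 H_pp_power"
    unfolding H_pp_power_def by (rule is_pp_power_pp_power) simp_all
  then show ?thesis
    unfolding pp_constructs_def hom_equiv_def using is_hom_H_code is_hom_H_decode by blast
qed

end
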